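(* Let $m\in\mathbb{N}$ and $V\in H_{+}^{-m}$ be a 1-periodic complex-valued distribution. Define on $L_2(0,1)$ the forms $t_V^{\pm}[u,v]=\langle V(x)u,v\rangle_{\pm}$ and $\tau_\pm[u,v]=\langle D_\pm^{2m}u,v\rangle_\pm$, both with domain $H_\pm^m$. Then $t_V^{\pm}$ is $\tau_\pm$-bounded with relative bound zero: for every $\delta>0$ there exists a constant $C_\delta\ge0$ such that $$|t_V^{\pm}[u]|\le\delta\,\tau_\pm[u]+C_\delta\|u\|^2_{L_2(0,1)},\qquad u\in H_\pm^m.$$
   Context: For $s\in\mathbb{R}$, $H_{+}^{s}$ is the space of formal series $f=\sum_{k\in\mathbb{Z}}\widehat f(2k)e^{i2k\pi x}$ with $\|f\|_{H_+^s}^2=\sum_k\langle 2k\rangle^{2s}|\widehat f(2k)|^2<\infty$, and $H_{-}^{s}$ is the space of formal series $f=\sum_{k}\widehat f(2k+1)e^{i(2k+1)\pi x}$ with $\|f\|_{H_-^s}^2=\sum_k\langle 2k+1\rangle^{2s}|\widehat f(2k+1)|^2<\infty$, where $\langle k\rangle=1+|k|$; $H_\pm^0=L_2(0,1)$. $\langle\cdot,\cdot\rangle_{\pm}$ is the pairing between $H_\pm^{s}$ and $H_\pm^{-s}$ extending the $L_2(0,1)$ inner product. $D_\pm^{2m}$ acts as multiplication by $(n\pi)^{2m}$ on the mode $e^{in\pi x}$. For $u\in H_\pm^{m}$, $V(x)u=\sum_n\big(\sum_j\widehat V(n-j)\widehat u(j)\big)e^{in\pi x}\in H_\pm^{-m}$.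 For a form $t$, $t[u]:=t[u,u]$. *)

theory Defs
  imports "HOL-Analysis.Analysis"
begin

text \<open>A formal trigonometric series \<open>\<Sum>\<^sub>n f\<^sup>^(n) e^{i n \<pi> x}\<close> is represented by its
  coefficient function \<open>f :: int \<Rightarrow> complex\<close>, with \<open>f n = f\<^sup>^(n)\<close>.
  \<open>\<langle>k\<rangle> = 1 + |k|\<close>.\<close>

definition jbr :: "int \<Rightarrow> real" where
  "jbr k = 1 + \<bar>real_of_int k\<bar>"

definition H_plus :: "real \<Rightarrow> (int \<Rightarrow> complex) set" where
  "H_plus s = {f. (\<forall>n. odd n \<longrightarrow> f n = 0) \<and>
      (\<lambda>n. jbr n powr (2 * s) * (cmod (f n))\<^sup>2) summable_on UNIV}"

definition H_minus :: "real \<Rightarrow> (int \<Rightarrow> complex) set" where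
  "H_minus s = {f. (\<forall>n. even n \<longrightarrow> f n = 0) \<and>
      (\<lambda>n. jbr n powr (2 * s) * (cmod (f n))\<^sup>2) summable_on UNIV}"

text \<open>Pairing extending the \<open>L\<^sub>2(0,1)\<close> inner product (Parseval, the modes
  \<open>e^{in\<pi>x}\<close> of one parity are orthonormal in \<open>L\<^sub>2(0,1)\<close>).\<close>
definition pairing :: "(int \<Rightarrow> complex) \<Rightarrow> (int \<Rightarrow> complex) \<Rightarrow> complex" where
  "pairing f g = (\<Sum>\<^sub>\<infinity>n. f n * cnj (g n))"

text \<open>Multiplication \<open>V(x)u\<close>: \<open>(Vu)\<^sup>^(n) = \<Sum>\<^sub>j V\<^sup>^(n-j) u\<^sup>^(j)\<close>.\<close>
definition mult_op :: "(int \<Rightarrow> complex) \<Rightarrow> (int \<Rightarrow> complex) \<Rightarrow> (int \<Rightarrow> complex)" where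
  "mult_op V u = (\<lambda>n. \<Sum>\<^sub>\<infinity>j. V (n - j) * u j)"

definition D_pow :: "nat \<Rightarrow> (int \<Rightarrow> complex) \<Rightarrow> (int \<Rightarrow> complex)" where
  "D_pow m u = (\<lambda>n. complex_of_real ((real_of_int n * pi) ^ (2 * m)) * u n)"

text \<open>The forms \<open>t\<^sub>V[u] = \<langle>V u, u\<rangle>\<close> and \<open>\<tau>[u] = \<langle>D\<^sup>2\<^sup>m u, u\<rangle>\<close> (the latter is real,
  we take its real part), and \<open>\<parallel>u\<parallel>\<^sup>2\<^sub>L\<^sub>2 = \<langle>u,u\<rangle>\<close>.\<close>
definition t_form :: "(int \<Rightarrow> complex) \<Rightarrow> (int \<Rightarrow> complex) \<Rightarrow> complex" where
  "t_form V u = pairing (mult_op V u) u"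

definition tau_form :: "nat \<Rightarrow> (int \<Rightarrow> complex) \<Rightarrow> real" where
  "tau_form m u = Re (pairing (D_pow m u) u)"

definition L2_normsq :: "(int \<Rightarrow> complex) \<Rightarrow> real" where
  "L2_normsq u = (\<Sum>\<^sub>\<infinity>n. (cmod (u n))\<^sup>2)"

end

theory Submission
  imports Defs
begin

text \<open>Split \<open>V\<close> into its modes in a finite set \<open>E\<close> and a tail of \<open>H\<^sup>-\<^sup>m\<close>-norm at most
  \<open>\<epsilon>\<close>. The modes in \<open>E\<close> act boundedly on \<open>L\<^sub>2\<close> (Schur test, with constant
  \<open>\<Sum>\<^sub>k\<^sub>\<in>\<^sub>E |V(k)|\<close>). For the tail, Peetre's inequality
  \<open>\<langle>n - j\<rangle>\<^sup>m \<le> 2\<^sup>m (\<langle>n\<rangle>\<^sup>m + \<langle>j\<rangle>\<^sup>m)\<close> and Cauchy-Schwarz bound the form by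
  \<open>2\<^sup>m\<^sup>+\<^sup>1 \<epsilon> \<parallel>u\<parallel>\<^sub>m \<Sum>\<^sub>j |u(j)|\<close>, where \<open>\<parallel>u\<parallel>\<^sub>m\<close> is the \<open>H\<^sup>m\<close>-norm, and
  \<open>\<Sum>\<^sub>j |u(j)| \<le> (\<Sum>\<^sub>j \<langle>j\<rangle>\<^sup>-\<^sup>2\<^sup>m)\<^sup>1\<^sup>/\<^sup>2 \<parallel>u\<parallel>\<^sub>m\<close>, which is finite as \<open>m \<ge> 1\<close>.
  Since \<open>\<parallel>u\<parallel>\<^sub>m\<^sup>2 \<le> 4\<^sup>m (\<parallel>u\<parallel>\<^sup>2 + \<tau>[u])\<close>, a small \<open>\<epsilon>\<close> gives relative bound \<open>\<delta>\<close>.\<close>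

subsection \<open>Japanese bracket\<close>

lemma jbr_pos: "0 < jbr k"
  by (simp add: jbr_def)

lemma one_le_jbr: "1 \<le> jbr k"
  by (simp add: jbr_def)

lemma jbr_diff_le: "jbr (n - j) \<le> jbr n + jbr j"
  by (simp add: jbr_def)

lemma power_add_le_two_power:
  fixes x y :: real
  assumes "0 \<le> x" "0 \<le> y"
  shows "(x + y) ^ m \<le> 2 ^ m * (x ^ m + y ^ m)"
proof -
  have "(x + y) ^ m \<le> (2 * max x y) ^ m"
    by (rule power_mono) (use assms in auto)
  also have "\<dots> = 2 ^ m * max x y ^ m"
    by (simp add: power_mult_distrib)
  also have "max x y ^ m \<le> x ^ m + y ^ m"
    using assms by (auto simp: max_def)
  finally show ?thesis
    by simp
qed

lemma jbr_power_diff_le: "jbr (n - j) ^ m \<le> 2 ^ m * (jbr n ^ m + jbr j ^ m)"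
proof -
  have "jbr (n - j) ^ m \<le> (jbr n + jbr j) ^ m"
    by (rule power_mono[OF jbr_diff_le]) (simp add: jbr_def)
  also have "\<dots> \<le> 2 ^ m * (jbr n ^ m + jbr j ^ m)"
    by (rule power_add_le_two_power) (simp_all add: jbr_def)
  finally show ?thesis .
qed

lemma jbr_even_power_le: "jbr n ^ (2 * m) \<le> 4 ^ m * (1 + (real_of_int n * pi) ^ (2 * m))"
proof -
  have "jbr n ^ (2 * m) \<le> 2 ^ (2 * m) * (1 + \<bar>real_of_int n\<bar> ^ (2 * m))"
    using power_add_le_two_power[of 1 "\<bar>real_of_int n\<bar>" "2 * m"] by (simp add: jbr_def)
  also have "\<bar>real_of_int n\<bar> ^ (2 * m) \<le> (real_of_int n * pi) ^ (2 * m)"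
  proof -
    have "\<bar>real_of_int n\<bar> ^ (2 * m) \<le> \<bar>real_of_int n * pi\<bar> ^ (2 * m)"
      using pi_ge_two by (intro power_mono) (auto simp: abs_mult mult_le_cancel_left1)
    then show ?thesis
      by (simp add: power_even_abs)
  qed
  finally show ?thesis
    by (simp add: power_mult)
qed

lemma summable_on_inverse_jbr_square: "(\<lambda>k. inverse (jbr k ^ 2)) summable_on UNIV"
proof -
  have "summable (\<lambda>n::nat. inverse (real (Suc n) ^ 2))"
    using inverse_power_summable[of 2, where 'a=real] by (subst summable_Suc_iff) simp
  then have nat: "(\<lambda>n::nat. inverse ((real n + 1) ^ 2)) summable_on UNIV"
    by (intro norm_summable_imp_summable_on) (simp add: add.commute)
  have pos: "(\<lambda>k. inverse (jbr k ^ 2)) summable_on range int"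
    by (subst summable_on_reindex) (use nat in \<open>auto simp: o_def jbr_def add.commute\<close>)
  have neg: "(\<lambda>k. inverse (jbr k ^ 2)) summable_on range (\<lambda>n. - int n)"
    by (subst summable_on_reindex) (use nat in \<open>auto simp: o_def jbr_def add.commute inj_on_def\<close>)
  have "k \<in> range int \<union> range (\<lambda>n. - int n)" for k
    by (cases k rule: int_cases) (auto simp: image_iff intro: exI[of _ "Suc _"])
  then have "range int \<union> range (\<lambda>n. - int n) = UNIV"
    by blast
  then show ?thesis
    using summable_on_union[OF pos neg] by simp
qed

lemma summable_on_inverse_jbr_even_power:
  assumes "1 \<le> m"
  shows "(\<lambda>k. inverse (jbr k ^ (2 * m))) summable_on UNIV"
proof (rule summable_on_comparison_test[OF summable_on_inverse_jbr_square])
  fix k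
  have "jbr k ^ 2 \<le> jbr k ^ (2 * m)"
    using assms one_le_jbr by (intro power_increasing) auto
  then show "inverse (jbr k ^ (2 * m)) \<le> inverse (jbr k ^ 2)"
    using jbr_pos[of k] by (simp add: le_imp_inverse_le)
qed (simp add: jbr_pos less_imp_le)

lemma summable_on_small_tail:
  fixes f :: "'a \<Rightarrow> real"
  assumes "f summable_on UNIV" "\<And>k. 0 \<le> f k" "0 < r"
  obtains E where "finite E" "\<And>G. finite G \<Longrightarrow> G \<inter> E = {} \<Longrightarrow> sum f G \<le> r"
proof -
  let ?I = "infsum f UNIV"
  have "\<forall>\<^sub>F E in finite_subsets_at_top UNIV. dist (sum f E) ?I < r"
    using infsum_tendsto[OF assms(1)] assms(3) tendsto_iff by blast
  then obtain E where "finite E" and E: "dist (sum f E) ?I < r"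
    unfolding eventually_finite_subsets_at_top by blast
  moreover have "sum f G \<le> r" if "finite G" "G \<inter> E = {}" for G
  proof -
    have "sum f G + sum f E = sum f (G \<union> E)"
      using that \<open>finite E\<close> by (simp add: sum.union_disjoint)
    also have "\<dots> \<le> ?I"
      by (rule finite_sum_le_infsum) (use assms that \<open>finite E\<close> in auto)
    finally show ?thesis
      using E by (simp add: dist_real_def)
  qed
  ultimately show ?thesis
    using that by blast
qed

subsection \<open>Sobolev spaces without parity restriction\<close>

definition H_space :: "real \<Rightarrow> (int \<Rightarrow> complex) set" where
  "H_space s = {f. (\<lambda>n. jbr n powr (2 * s) * (cmod (f n))\<^sup>2) summable_on UNIV}"

lemma H_plus_subset_H_space: "H_plus s \<subseteq> H_space s"
  by (auto simp: H_plus_def H_space_def)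

lemma H_minus_subset_H_space: "H_minus s \<subseteq> H_space s"
  by (auto simp: H_minus_def H_space_def)

lemma H_space_nat_iff:
  "u \<in> H_space (real m) \<longleftrightarrow> (\<lambda>n. jbr n ^ (2 * m) * (cmod (u n))\<^sup>2) summable_on UNIV"
proof -
  have "jbr n powr (2 * real m) = jbr n ^ (2 * m)" for n
    using powr_realpow[OF jbr_pos, of n "2 * m"] by simp
  then show ?thesis
    by (simp add: H_space_def)
qed

lemma H_space_neg_nat_iff:
  "V \<in> H_space (- real m) \<longleftrightarrow> (\<lambda>n. (cmod (V n) / jbr n ^ m)\<^sup>2) summable_on UNIV"
proof -
  have "jbr n powr (2 * - real m) * (cmod (V n))\<^sup>2 = (cmod (V n) / jbr n ^ m)\<^sup>2" for n
  proof -
    have "jbr n powr (2 * - real m) = inverse (jbr n powr real (2 * m))"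
      by (simp add: powr_minus)
    also have "\<dots> = inverse ((jbr n ^ m)\<^sup>2)"
      using powr_realpow[OF jbr_pos, of n "2 * m"] by (simp add: power_mult mult.commute)
    finally show ?thesis
      by (simp add: divide_inverse power_mult_distrib power_inverse mult.commute)
  qed
  then show ?thesis
    by (simp add: H_space_def)
qed

lemma summable_on_norm_square_of_H_space:
  assumes "u \<in> H_space (real m)"
  shows "(\<lambda>n. (cmod (u n))\<^sup>2) summable_on UNIV"
proof (rule summable_on_comparison_test)
  show "(\<lambda>n. jbr n ^ (2 * m) * (cmod (u n))\<^sup>2) summable_on UNIV"
    using assms by (simp add: H_space_nat_iff)
  show "(cmod (u n))\<^sup>2 \<le> jbr n ^ (2 * m) * (cmod (u n))\<^sup>2" for n
    using one_le_power[OF one_le_jbr, of n "2 * m"] by (simp add: mult_le_cancel_right1)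
qed simp

lemma summable_on_tau_density_of_H_space:
  assumes "u \<in> H_space (real m)"
  shows "(\<lambda>n. (real_of_int n * pi) ^ (2 * m) * (cmod (u n))\<^sup>2) summable_on UNIV"
proof (rule summable_on_comparison_test)
  show "(\<lambda>n. pi ^ (2 * m) * (jbr n ^ (2 * m) * (cmod (u n))\<^sup>2)) summable_on UNIV"
    using assms by (intro summable_on_cmult_right) (simp add: H_space_nat_iff)
  show "(real_of_int n * pi) ^ (2 * m) * (cmod (u n))\<^sup>2 \<le> pi ^ (2 * m) * (jbr n ^ (2 * m) * (cmod (u n))\<^sup>2)" for n
  proof -
    have "(real_of_int n * pi) ^ (2 * m) = \<bar>real_of_int n * pi\<bar> ^ (2 * m)"
      by (simp add: power_even_abs)
    also have "\<dots> \<le> (jbr n * pi) ^ (2 * m)"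
      by (intro power_mono) (auto simp: abs_mult jbr_def)
    finally have "(real_of_int n * pi) ^ (2 * m) \<le> pi ^ (2 * m) * jbr n ^ (2 * m)"
      by (simp add: power_mult_distrib mult.commute)
    from mult_right_mono[OF this zero_le_power2[of "cmod (u n)"]] show ?thesis
      by (simp only: mult.assoc)
  qed
qed simp

lemma tau_form_eq_infsum:
  assumes "(\<lambda>n. (real_of_int n * pi) ^ (2 * m) * (cmod (u n))\<^sup>2) summable_on UNIV"
  shows "tau_form m u = (\<Sum>\<^sub>\<infinity>n. (real_of_int n * pi) ^ (2 * m) * (cmod (u n))\<^sup>2)"
proof -
  have "D_pow m u n * cnj (u n) = complex_of_real ((real_of_int n * pi) ^ (2 * m) * (cmod (u n))\<^sup>2)" for n
    unfolding D_pow_def by (simp only: mult.assoc complex_norm_square[symmetric] of_real_mult)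
  then show ?thesis
    unfolding tau_form_def pairing_def
    using infsum_Re[OF summable_on_of_real[OF assms]] by simp
qed

subsection \<open>Finite convolution sums\<close>

lemma sum_reindex_le_sum_support:
  fixes h :: "'a \<Rightarrow> real"
  assumes "inj g" "finite F" "finite E" "\<And>k. 0 \<le> h k" "\<And>k. k \<notin> E \<Longrightarrow> h k = 0"
  shows "(\<Sum>x\<in>F. h (g x)) \<le> sum h E"
proof -
  have "(\<Sum>x\<in>F. h (g x)) = sum h (g ` F)"
    using assms(1) by (simp add: sum.reindex inj_on_def)
  also have "\<dots> = sum h (g ` F \<inter> E)"
    using assms(2,5) by (intro sum.mono_neutral_right) auto
  also have "\<dots> \<le> sum h E"
    using assms(3,4) by (intro sum_mono2) auto
  finally show ?thesis .
qed

lemma convolution_form_le_support: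
  fixes h b :: "int \<Rightarrow> real"
  assumes "finite F" "finite E" "\<And>k. 0 \<le> h k" "\<And>k. k \<notin> E \<Longrightarrow> h k = 0"
  shows "(\<Sum>n\<in>F. \<Sum>j\<in>F. h (n - j) * b j * b n) \<le> sum h E * (\<Sum>n\<in>F. (b n)\<^sup>2)"
proof -
  have row: "(\<Sum>x\<in>F. h (g x)) \<le> sum h E" if "inj g" for g :: "int \<Rightarrow> int"
    using sum_reindex_le_sum_support[OF that assms] .
  have pointwise: "h (n - j) * b j * b n \<le> h (n - j) * (b j)\<^sup>2 / 2 + h (n - j) * (b n)\<^sup>2 / 2" for n j
  proof -
    have "b j * b n \<le> (b j)\<^sup>2 / 2 + (b n)\<^sup>2 / 2"
      using sum_squares_ge_zero[of "b j - b n" 0] by (simp add: power2_eq_square algebra_simps)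
    then show ?thesis
      using mult_left_mono[OF _ assms(3)] by (fastforce simp: algebra_simps)
  qed
  have first: "(\<Sum>n\<in>F. \<Sum>j\<in>F. h (n - j) * (b j)\<^sup>2) \<le> sum h E * (\<Sum>n\<in>F. (b n)\<^sup>2)"
  proof -
    have "(\<Sum>n\<in>F. \<Sum>j\<in>F. h (n - j) * (b j)\<^sup>2) = (\<Sum>j\<in>F. (b j)\<^sup>2 * (\<Sum>n\<in>F. h (n - j)))"
      by (subst sum.swap) (simp add: sum_distrib_left mult.commute)
    also have "\<dots> \<le> (\<Sum>j\<in>F. (b j)\<^sup>2 * sum h E)"
      by (intro sum_mono mult_left_mono row) (auto simp: inj_def)
    also have "\<dots> = sum h E * (\<Sum>n\<in>F. (b n)\<^sup>2)"
      by (simp add: sum_distrib_left mult.commute)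
    finally show ?thesis .
  qed
  have second: "(\<Sum>n\<in>F. \<Sum>j\<in>F. h (n - j) * (b n)\<^sup>2) \<le> sum h E * (\<Sum>n\<in>F. (b n)\<^sup>2)"
  proof -
    have "(\<Sum>n\<in>F. \<Sum>j\<in>F. h (n - j) * (b n)\<^sup>2) = (\<Sum>n\<in>F. (b n)\<^sup>2 * (\<Sum>j\<in>F. h (n - j)))"
      by (simp add: sum_distrib_left mult.commute)
    also have "\<dots> \<le> (\<Sum>n\<in>F. (b n)\<^sup>2 * sum h E)"
      by (intro sum_mono mult_left_mono row) (auto simp: inj_def)
    also have "\<dots> = sum h E * (\<Sum>n\<in>F. (b n)\<^sup>2)"
      by (simp add: sum_distrib_left mult.commute)
    finally show ?thesis .
  qed
  have "(\<Sum>n\<in>F. \<Sum>j\<in>F. h (n - j) * b j * b n)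
      \<le> (\<Sum>n\<in>F. \<Sum>j\<in>F. h (n - j) * (b j)\<^sup>2) / 2 + (\<Sum>n\<in>F. \<Sum>j\<in>F. h (n - j) * (b n)\<^sup>2) / 2"
    unfolding sum_divide_distrib sum.distrib[symmetric] by (intro sum_mono pointwise)
  with first second show ?thesis
    by linarith
qed

lemma convolution_form_le_l2:
  fixes c X b :: "int \<Rightarrow> real"
  assumes "finite F" "\<And>j. 0 \<le> b j" "\<And>G. finite G \<Longrightarrow> (\<Sum>k\<in>G. (c k)\<^sup>2) \<le> \<epsilon>\<^sup>2" "0 \<le> \<epsilon>"
  shows "(\<Sum>n\<in>F. \<Sum>j\<in>F. c (n - j) * X n * b j) \<le> \<epsilon> * L2_set X F * sum b F"
proof -
  have column: "(\<Sum>n\<in>F. c (n - j) * X n) \<le> \<epsilon> * L2_set X F" for j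
  proof -
    have "(\<Sum>n\<in>F. c (n - j) * X n) \<le> (\<Sum>n\<in>F. \<bar>c (n - j)\<bar> * \<bar>X n\<bar>)"
      by (intro sum_mono) (simp add: abs_mult[symmetric])
    also have "\<dots> \<le> L2_set (\<lambda>n. c (n - j)) F * L2_set X F"
      by (rule L2_set_mult_ineq)
    also have "L2_set (\<lambda>n. c (n - j)) F \<le> \<epsilon>"
    proof -
      have "(\<Sum>n\<in>F. (c (n - j))\<^sup>2) = (\<Sum>k\<in>(\<lambda>n. n - j) ` F. (c k)\<^sup>2)"
        by (simp add: sum.reindex inj_on_def)
      also have "\<dots> \<le> \<epsilon>\<^sup>2"
        using assms(1,3) by blast
      finally show ?thesis
        unfolding L2_set_def using assms(4) real_le_lsqrt by blast
    qed
    then have "L2_set (\<lambda>n. c (n - j)) F * L2_set X F \<le> \<epsilon> * L2_set X F"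
      by (intro mult_right_mono L2_set_nonneg)
    finally show ?thesis .
  qed
  have "(\<Sum>n\<in>F. \<Sum>j\<in>F. c (n - j) * X n * b j) = (\<Sum>j\<in>F. b j * (\<Sum>n\<in>F. c (n - j) * X n))"
    by (subst sum.swap) (simp add: sum_distrib_left mult_ac)
  also have "\<dots> \<le> (\<Sum>j\<in>F. b j * (\<epsilon> * L2_set X F))"
    by (intro sum_mono mult_left_mono column assms(2))
  also have "\<dots> = \<epsilon> * L2_set X F * sum b F"
    by (simp add: sum_distrib_right mult.commute)
  finally show ?thesis .
qed

lemma convolution_form_le_weighted:
  fixes a b :: "int \<Rightarrow> real"
  assumes "finite F" "\<And>k. 0 \<le> a k" "\<And>j. 0 \<le> b j" "0 \<le> \<epsilon>"
    and small: "\<And>G. finite G \<Longrightarrow> (\<Sum>k\<in>G. (a k / jbr k ^ m)\<^sup>2) \<le> \<epsilon>\<^sup>2"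
  shows "(\<Sum>n\<in>F. \<Sum>j\<in>F. a (n - j) * b j * b n)
    \<le> 2 ^ (m + 1) * \<epsilon> * L2_set (\<lambda>j. inverse (jbr j ^ m)) F * (\<Sum>n\<in>F. jbr n ^ (2 * m) * (b n)\<^sup>2)"
proof -
  define c where "c k = a k / jbr k ^ m" for k
  define X where "X n = jbr n ^ m * b n" for n
  define w where "w j = inverse (jbr j ^ m)" for j
  have c_nonneg: "0 \<le> c k" for k
    using assms(2) jbr_pos[of k] by (simp add: c_def)
  have c_reflected_small: "(\<Sum>k\<in>G. (c (- k))\<^sup>2) \<le> \<epsilon>\<^sup>2" if "finite G" for G
    using small[of "uminus ` G"] that by (simp add: sum.reindex c_def)
  have pointwise: "a (n - j) * b j * b n \<le> 2 ^ m * (c (n - j) * X n * b j + c (- (j - n)) * X j * b n)" for n j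
  proof -
    have "a (n - j) = c (n - j) * jbr (n - j) ^ m"
      using jbr_pos[of "n - j"] by (simp add: c_def)
    also have "\<dots> \<le> c (n - j) * (2 ^ m * (jbr n ^ m + jbr j ^ m))"
      by (intro mult_left_mono jbr_power_diff_le c_nonneg)
    finally have "a (n - j) * (b j * b n) \<le> c (n - j) * (2 ^ m * (jbr n ^ m + jbr j ^ m)) * (b j * b n)"
      using assms(3) by (intro mult_right_mono) auto
    then show ?thesis
      by (simp add: X_def algebra_simps)
  qed
  have sum_b: "sum b F \<le> L2_set w F * L2_set X F"
  proof -
    have "b j = \<bar>w j\<bar> * \<bar>X j\<bar>" for j
      using jbr_pos[of j] assms(3)[of j] by (simp add: w_def X_def abs_mult)
    then have "sum b F = (\<Sum>j\<in>F. \<bar>w j\<bar> * \<bar>X j\<bar>)"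
      by simp
    also have "\<dots> \<le> L2_set w F * L2_set X F"
      by (rule L2_set_mult_ineq)
    finally show ?thesis .
  qed
  have "(\<Sum>n\<in>F. \<Sum>j\<in>F. a (n - j) * b j * b n)
      \<le> (\<Sum>n\<in>F. \<Sum>j\<in>F. 2 ^ m * (c (n - j) * X n * b j + c (- (j - n)) * X j * b n))"
    by (intro sum_mono pointwise)
  also have "\<dots> = 2 ^ m * ((\<Sum>n\<in>F. \<Sum>j\<in>F. c (n - j) * X n * b j) + (\<Sum>j\<in>F. \<Sum>n\<in>F. c (- (j - n)) * X j * b n))"
    unfolding sum_distrib_left distrib_left sum.distrib by (intro arg_cong2[where f="(+)"] refl sum.swap)
  also have "\<dots> \<le> 2 ^ m * (\<epsilon> * L2_set X F * sum b F + \<epsilon> * L2_set X F * sum b F)"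
  proof (intro mult_left_mono add_mono)
    show "(\<Sum>n\<in>F. \<Sum>j\<in>F. c (n - j) * X n * b j) \<le> \<epsilon> * L2_set X F * sum b F"
      by (rule convolution_form_le_l2[OF assms(1,3) _ assms(4)]) (use small in \<open>simp add: c_def\<close>)
    show "(\<Sum>j\<in>F. \<Sum>n\<in>F. c (- (j - n)) * X j * b n) \<le> \<epsilon> * L2_set X F * sum b F"
      by (rule convolution_form_le_l2[where c="\<lambda>k. c (- k)", OF assms(1,3) c_reflected_small assms(4)])
  qed simp
  also have "\<dots> \<le> 2 ^ m * (\<epsilon> * L2_set X F * (L2_set w F * L2_set X F) + \<epsilon> * L2_set X F * (L2_set w F * L2_set X F))"
    using sum_b by (intro mult_left_mono add_mono) (simp_all add: assms(4) L2_set_nonneg)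
  also have "\<dots> = 2 ^ (m + 1) * \<epsilon> * L2_set w F * (L2_set X F)\<^sup>2"
    by (simp add: power2_eq_square algebra_simps)
  also have "(L2_set X F)\<^sup>2 = (\<Sum>n\<in>F. jbr n ^ (2 * m) * (b n)\<^sup>2)"
    by (simp add: L2_set_def sum_nonneg X_def power_mult_distrib power_mult mult.commute)
  finally show ?thesis
    by (simp only: w_def)
qed

lemma convolution_form_le:
  fixes a b :: "int \<Rightarrow> real"
  assumes "finite F" "finite E" "\<And>k. 0 \<le> a k" "\<And>j. 0 \<le> b j" "0 \<le> \<epsilon>"
    and small: "\<And>G. finite G \<Longrightarrow> G \<inter> E = {} \<Longrightarrow> (\<Sum>k\<in>G. (a k / jbr k ^ m)\<^sup>2) \<le> \<epsilon>\<^sup>2"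
  shows "(\<Sum>n\<in>F. \<Sum>j\<in>F. a (n - j) * b j * b n)
    \<le> sum a E * (\<Sum>n\<in>F. (b n)\<^sup>2)
      + 2 ^ (m + 1) * \<epsilon> * L2_set (\<lambda>j. inverse (jbr j ^ m)) F * (\<Sum>n\<in>F. jbr n ^ (2 * m) * (b n)\<^sup>2)"
proof -
  define head where "head k = (if k \<in> E then a k else 0)" for k
  define tail where "tail k = (if k \<in> E then 0 else a k)" for k
  have "(\<Sum>n\<in>F. \<Sum>j\<in>F. a (n - j) * b j * b n)
      = (\<Sum>n\<in>F. \<Sum>j\<in>F. head (n - j) * b j * b n) + (\<Sum>n\<in>F. \<Sum>j\<in>F. tail (n - j) * b j * b n)"
  proof -
    have "a k = head k + tail k" for k
      by (simp add: head_def tail_def)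
    then show ?thesis
      by (simp only: distrib_right sum.distrib)
  qed
  moreover have "(\<Sum>n\<in>F. \<Sum>j\<in>F. head (n - j) * b j * b n) \<le> sum a E * (\<Sum>n\<in>F. (b n)\<^sup>2)"
  proof -
    have "sum head E = sum a E"
      by (simp add: head_def)
    moreover have "(\<Sum>n\<in>F. \<Sum>j\<in>F. head (n - j) * b j * b n) \<le> sum head E * (\<Sum>n\<in>F. (b n)\<^sup>2)"
      using assms(1-3) by (intro convolution_form_le_support) (auto simp: head_def)
    ultimately show ?thesis
      by simp
  qed
  moreover have "(\<Sum>n\<in>F. \<Sum>j\<in>F. tail (n - j) * b j * b n)
      \<le> 2 ^ (m + 1) * \<epsilon> * L2_set (\<lambda>j. inverse (jbr j ^ m)) F * (\<Sum>n\<in>F. jbr n ^ (2 * m) * (b n)\<^sup>2)"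
  proof (rule convolution_form_le_weighted[OF assms(1) _ assms(4,5)])
    show "0 \<le> tail k" for k
      using assms(3) by (simp add: tail_def)
    show "(\<Sum>k\<in>G. (tail k / jbr k ^ m)\<^sup>2) \<le> \<epsilon>\<^sup>2" if "finite G" for G
    proof -
      have "(\<Sum>k\<in>G. (tail k / jbr k ^ m)\<^sup>2) = (\<Sum>k\<in>G - E. (a k / jbr k ^ m)\<^sup>2)"
        using that by (intro sum.mono_neutral_cong_right) (auto simp: tail_def)
      also have "\<dots> \<le> \<epsilon>\<^sup>2"
        using that by (intro small) auto
      finally show ?thesis .
    qed
  qed
  ultimately show ?thesis
    by linarith
qed

subsection \<open>Relative boundedness of the form\<close>

lemma cmod_t_form_le:
  assumes "\<And>F. finite F \<Longrightarrow> (\<Sum>n\<in>F. \<Sum>j\<in>F. cmod (V (n - j)) * cmod (u j) * cmod (u n)) \<le> K"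
  shows "cmod (t_form V u) \<le> K"
proof -
  define h where "h p = V (fst p - snd p) * u (snd p) * cnj (u (fst p))" for p
  have bounded: "(\<Sum>p\<in>P. norm (h p)) \<le> K" if "finite P" for P
  proof -
    define F where "F = fst ` P \<union> snd ` P"
    have "finite F"
      using that by (simp add: F_def)
    have "(\<Sum>p\<in>P. norm (h p)) \<le> (\<Sum>p\<in>F \<times> F. norm (h p))"
      using \<open>finite F\<close> by (intro sum_mono2) (auto simp: F_def intro: rev_image_eqI)
    also have "\<dots> = (\<Sum>n\<in>F. \<Sum>j\<in>F. cmod (V (n - j)) * cmod (u j) * cmod (u n))"
      by (simp add: sum.cartesian_product h_def norm_mult split_beta)
    also have "\<dots> \<le> K"
      by (rule assms[OF \<open>finite F\<close>])
    finally show ?thesis .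
  qed
  have abs_summable: "(\<lambda>p. norm (h p)) summable_on UNIV"
    using bounded by (intro nonneg_bdd_above_summable_on) (auto intro!: bdd_aboveI)
  have "t_form V u = (\<Sum>\<^sub>\<infinity>n. \<Sum>\<^sub>\<infinity>j. h (n, j))"
    unfolding t_form_def pairing_def mult_op_def h_def by (simp add: infsum_cmult_left')
  also have "\<dots> = infsum h (UNIV \<times> UNIV)"
    by (rule infsum_Sigma_banach) (use abs_summable_summable[OF abs_summable] in simp)
  finally have "cmod (t_form V u) \<le> (\<Sum>\<^sub>\<infinity>p. norm (h p))"
    using norm_infsum_bound[OF abs_summable] by simp
  also have "\<dots> \<le> K"
    using abs_summable bounded by (intro infsum_le_finite_sums) auto
  finally show ?thesis .
qed

lemma convolution_form_le_norms:
  assumes "1 \<le> m" "u \<in> H_space (real m)" "finite F" "finite E" "0 \<le> \<epsilon>"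
    and small: "\<And>G. finite G \<Longrightarrow> G \<inter> E = {} \<Longrightarrow> (\<Sum>k\<in>G. (cmod (V k) / jbr k ^ m)\<^sup>2) \<le> \<epsilon>\<^sup>2"
  shows "(\<Sum>n\<in>F. \<Sum>j\<in>F. cmod (V (n - j)) * cmod (u j) * cmod (u n))
    \<le> (\<Sum>k\<in>E. cmod (V k)) * L2_normsq u
      + 2 ^ (m + 1) * \<epsilon> * sqrt (\<Sum>\<^sub>\<infinity>k. inverse (jbr k ^ (2 * m))) * 4 ^ m * (L2_normsq u + tau_form m u)"
proof -
  define S where "S = (\<Sum>\<^sub>\<infinity>k. inverse (jbr k ^ (2 * m)))"
  define L where "L = L2_normsq u"
  define T where "T = tau_form m u"
  have SB: "(\<Sum>n\<in>F. (cmod (u n))\<^sup>2) \<le> L"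
    unfolding L_def L2_normsq_def using summable_on_norm_square_of_H_space[OF assms(2)] assms(3)
    by (intro finite_sum_le_infsum) auto
  have ST: "(\<Sum>n\<in>F. (real_of_int n * pi) ^ (2 * m) * (cmod (u n))\<^sup>2) \<le> T"
    unfolding T_def tau_form_eq_infsum[OF summable_on_tau_density_of_H_space[OF assms(2)]]
    using summable_on_tau_density_of_H_space[OF assms(2)] assms(3)
    by (intro finite_sum_le_infsum) auto
  have SX: "(\<Sum>n\<in>F. jbr n ^ (2 * m) * (cmod (u n))\<^sup>2) \<le> 4 ^ m * (L + T)"
  proof -
    have "(\<Sum>n\<in>F. jbr n ^ (2 * m) * (cmod (u n))\<^sup>2)
        \<le> (\<Sum>n\<in>F. 4 ^ m * (1 + (real_of_int n * pi) ^ (2 * m)) * (cmod (u n))\<^sup>2)"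
      by (intro sum_mono mult_right_mono jbr_even_power_le) simp
    also have "\<dots> = 4 ^ m * ((\<Sum>n\<in>F. (cmod (u n))\<^sup>2) + (\<Sum>n\<in>F. (real_of_int n * pi) ^ (2 * m) * (cmod (u n))\<^sup>2))"
      by (simp add: sum_distrib_left sum.distrib algebra_simps)
    also have "\<dots> \<le> 4 ^ m * (L + T)"
      using SB ST by simp
    finally show ?thesis .
  qed
  have L2w: "L2_set (\<lambda>j. inverse (jbr j ^ m)) F \<le> sqrt S"
  proof -
    have "(\<Sum>j\<in>F. (inverse (jbr j ^ m))\<^sup>2) = (\<Sum>j\<in>F. inverse (jbr j ^ (2 * m)))"
      by (simp add: power_inverse mult.commute flip: power_mult)
    also have "\<dots> \<le> S"
      unfolding S_def using summable_on_inverse_jbr_even_power[OF assms(1)] assms(3)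
      by (intro finite_sum_le_infsum) auto
    finally show ?thesis
      by (simp add: L2_set_def)
  qed
  have "0 \<le> S"
    unfolding S_def by (intro infsum_nonneg) simp
  have head: "(\<Sum>k\<in>E. cmod (V k)) * (\<Sum>n\<in>F. (cmod (u n))\<^sup>2) \<le> (\<Sum>k\<in>E. cmod (V k)) * L"
    by (intro mult_left_mono SB sum_nonneg) simp
  have "L2_set (\<lambda>j. inverse (jbr j ^ m)) F * (\<Sum>n\<in>F. jbr n ^ (2 * m) * (cmod (u n))\<^sup>2)
      \<le> sqrt S * (4 ^ m * (L + T))"
    using \<open>0 \<le> S\<close> by (intro mult_mono L2w SX) (simp_all add: sum_nonneg)
  then have tail: "2 ^ (m + 1) * \<epsilon> * (L2_set (\<lambda>j. inverse (jbr j ^ m)) F * (\<Sum>n\<in>F. jbr n ^ (2 * m) * (cmod (u n))\<^sup>2))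
      \<le> 2 ^ (m + 1) * \<epsilon> * (sqrt S * (4 ^ m * (L + T)))"
    using assms(5) by (intro mult_left_mono) simp_all
  have "(\<Sum>n\<in>F. \<Sum>j\<in>F. cmod (V (n - j)) * cmod (u j) * cmod (u n))
      \<le> (\<Sum>k\<in>E. cmod (V k)) * (\<Sum>n\<in>F. (cmod (u n))\<^sup>2)
        + 2 ^ (m + 1) * \<epsilon> * L2_set (\<lambda>j. inverse (jbr j ^ m)) F * (\<Sum>n\<in>F. jbr n ^ (2 * m) * (cmod (u n))\<^sup>2)"
    using assms(3-5) small by (intro convolution_form_le) auto
  with head tail show ?thesis
    unfolding S_def[symmetric] L_def[symmetric] T_def[symmetric] by (simp only: mult.assoc)
qed

lemma t_form_relatively_bounded:
  assumes "1 \<le> m" "V \<in> H_space (- real m)" "0 < \<delta>"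
  obtains C where "0 \<le> C"
    "\<And>u. u \<in> H_space (real m) \<Longrightarrow> cmod (t_form V u) \<le> \<delta> * tau_form m u + C * L2_normsq u"
proof -
  define S where "S = (\<Sum>\<^sub>\<infinity>k. inverse (jbr k ^ (2 * m)))"
  define \<epsilon> where "\<epsilon> = \<delta> / (2 ^ (m + 1) * 4 ^ m * (sqrt S + 1))"
  have "0 \<le> S"
    unfolding S_def by (intro infsum_nonneg) simp
  then have denominator: "0 < sqrt S + 1"
    using real_sqrt_ge_zero by (simp add: add_nonneg_pos)
  then have "0 < \<epsilon>"
    using assms(3) by (simp add: \<epsilon>_def)
  have \<epsilon>_factor: "2 ^ (m + 1) * \<epsilon> * sqrt S * 4 ^ m \<le> \<delta>"
  proof -
    have "2 ^ (m + 1) * \<epsilon> * sqrt S * 4 ^ m = \<delta> * (sqrt S / (sqrt S + 1))"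
      using denominator by (simp add: \<epsilon>_def)
    also have "\<dots> \<le> \<delta>"
      using denominator assms(3) by (intro mult_left_le) auto
    finally show ?thesis .
  qed
  have "(\<lambda>k. (cmod (V k) / jbr k ^ m)\<^sup>2) summable_on UNIV"
    using assms(2) by (simp add: H_space_neg_nat_iff)
  then obtain E where "finite E"
    and small: "\<And>G. finite G \<Longrightarrow> G \<inter> E = {} \<Longrightarrow> (\<Sum>k\<in>G. (cmod (V k) / jbr k ^ m)\<^sup>2) \<le> \<epsilon>\<^sup>2"
    by (rule summable_on_small_tail[where r = "\<epsilon>\<^sup>2"]) (use \<open>0 < \<epsilon>\<close> in auto)
  define A where "A = (\<Sum>k\<in>E. cmod (V k))"
  show ?thesis
  proof (rule that)
    show "0 \<le> A + \<delta>"
      using assms(3) by (simp add: A_def sum_nonneg)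
    fix u
    assume u: "u \<in> H_space (real m)"
    have "0 \<le> L2_normsq u + tau_form m u"
      unfolding L2_normsq_def tau_form_eq_infsum[OF summable_on_tau_density_of_H_space[OF u]]
      by (intro add_nonneg_nonneg infsum_nonneg) (simp_all add: zero_le_even_power)
    then have small_tail: "2 ^ (m + 1) * \<epsilon> * sqrt S * 4 ^ m * (L2_normsq u + tau_form m u)
        \<le> \<delta> * (L2_normsq u + tau_form m u)"
      by (rule mult_right_mono[OF \<epsilon>_factor])
    have "(\<Sum>n\<in>F. \<Sum>j\<in>F. cmod (V (n - j)) * cmod (u j) * cmod (u n))
        \<le> \<delta> * tau_form m u + (A + \<delta>) * L2_normsq u" if "finite F" for F
    proof -
      have "(\<Sum>n\<in>F. \<Sum>j\<in>F. cmod (V (n - j)) * cmod (u j) * cmod (u n))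
          \<le> A * L2_normsq u + 2 ^ (m + 1) * \<epsilon> * sqrt S * 4 ^ m * (L2_normsq u + tau_form m u)"
        unfolding A_def S_def
        by (rule convolution_form_le_norms[OF assms(1) u that \<open>finite E\<close> _ small]) (use \<open>0 < \<epsilon>\<close> in simp)
      also have "\<dots> \<le> A * L2_normsq u + \<delta> * (L2_normsq u + tau_form m u)"
        using small_tail by (rule add_left_mono)
      also have "\<dots> = \<delta> * tau_form m u + (A + \<delta>) * L2_normsq u"
        by (simp add: algebra_simps)
      finally show ?thesis .
    qed
    then show "cmod (t_form V u) \<le> \<delta> * tau_form m u + (A + \<delta>) * L2_normsq u"
      by (rule cmod_t_form_le)
  qed
qed

theorem proposition1:
  fixes m :: nat and V :: "int \<Rightarrow> complex"
  assumes "m \<ge> 1"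
    and "V \<in> H_plus (- real m)"
  shows "(\<forall>\<delta>>0. \<exists>C\<ge>0. \<forall>u\<in>H_plus (real m).
            cmod (t_form V u) \<le> \<delta> * tau_form m u + C * L2_normsq u)
       \<and> (\<forall>\<delta>>0. \<exists>C\<ge>0. \<forall>u\<in>H_minus (real m).
            cmod (t_form V u) \<le> \<delta> * tau_form m u + C * L2_normsq u)"
proof -
  have V: "V \<in> H_space (- real m)"
    using assms(2) H_plus_subset_H_space by blast
  have "\<exists>C\<ge>0. \<forall>u\<in>H. cmod (t_form V u) \<le> \<delta> * tau_form m u + C * L2_normsq u"
    if H: "H \<subseteq> H_space (real m)" and \<delta>: "0 < \<delta>" for H \<delta>
  proof -
    obtain C where "0 \<le> C"
      and "\<And>u. u \<in> H_space (real m) \<Longrightarrow> cmod (t_form V u) \<le> \<delta> * tau_form m u + C * L2_normsq u"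
      using t_form_relatively_bounded[OF assms(1) V \<delta>] by blast
    then show ?thesis
      using H by blast
  qed
  then show ?thesis
    using H_plus_subset_H_space H_minus_subset_H_space by blast
qed

end
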